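(* Let $\Gamma=(V,E)$ be a graph, let $M_v$ ($v\in V$) be monoids and $M=\Gamma_{v\in V}M_v$. Then for each vertex $v$, each element of $M$ has exactly one final $v$-component and exactly one final $v$-complement.
   Context: A graph $\Gamma=(V,E)$ has vertex set $V$ and irreflexive symmetric edge relation $E$. The graph product $M=\Gamma_{v\in V}M_v$ of pairwise disjoint monoids $M_v$ is the quotient of their free product by the congruence generated by $(mn,nm)$ for $m\in M_u$, $n\in M_v$, $(u,v)\in E$; each $M_v$ is identified with its (isomorphic) image in $M$. Let $X$ be the disjoint union of the sets $M_v\setminus\{1\}$, and for $m\in M_v\setminus\{1\}$ set $C(m)=v$. A word $x_1\circ\cdots\circ x_n$ in the free monoid $X^*$ is an expression for the element $x_1x_2\cdots x_n$ of $M$. It is reduced if whenever $i<j$ and $C(x_i)=C(x_j)$ there is $k$ with $i<k<j$ and $(C(x_i),C(x_k))\notin E$. For $a,a'\in M$, $v\in V$ and $c\in M_v\setminus\{1\}$: $a$ has final $v$-component $c$ and final $v$-complement $a'$ if $a$ has a reduced expression $a_1\circ\cdots\circ a_m\circ c$ with $a_1\cdots a_m=a'$. Also, $a$ has final $v$-component $1$ and final $v$-complement $a$ if $a$ has a reduced expression $a_1\circ\cdots\circ a_m$ such that either (i) $C(a_j)\ne v$ for all $j$, or (ii) there is $k$ with $(C(a_k),v)\notin E$ and $C(a_j)\neq v$ for all $j\ge k$. *)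

theory Defs
  imports "HOL-Algebra.Group"
begin

text \<open>The vertex monoids are HOL-Algebra monoids Mv v over a common
element type; their pairwise disjointness is realised by tagging each element
with its vertex, so a letter of X is a pair (v, m) with m a non-identity
element of Mv v, and C (v, m) = v.\<close>

definition gp_letters :: "('v \<Rightarrow> ('a, 'b) monoid_scheme) \<Rightarrow> ('v \<times> 'a) set" where
  "gp_letters Mv = {(v, m). m \<in> carrier (Mv v) \<and> m \<noteq> \<one>\<^bsub>Mv v\<^esub>}"

inductive gp_step :: "('v \<Rightarrow> ('a, 'b) monoid_scheme) \<Rightarrow> ('v \<times> 'v) set
    \<Rightarrow> ('v \<times> 'a) list \<Rightarrow> ('v \<times> 'a) list \<Rightarrow> bool"
  for Mv E where
  mult: "\<lbrakk> u \<in> lists (gp_letters Mv); w \<in> lists (gp_letters Mv);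
           (v, m) \<in> gp_letters Mv; (v, n) \<in> gp_letters Mv \<rbrakk> \<Longrightarrow>
         gp_step Mv E (u @ [(v, m), (v, n)] @ w)
           (u @ (if m \<otimes>\<^bsub>Mv v\<^esub> n = \<one>\<^bsub>Mv v\<^esub> then []
                 else [(v, m \<otimes>\<^bsub>Mv v\<^esub> n)]) @ w)"
| comm: "\<lbrakk> u \<in> lists (gp_letters Mv); w \<in> lists (gp_letters Mv);
           (v, m) \<in> gp_letters Mv; (v', n) \<in> gp_letters Mv; (v, v') \<in> E \<rbrakk> \<Longrightarrow>
         gp_step Mv E (u @ [(v, m), (v', n)] @ w) (u @ [(v', n), (v, m)] @ w)"

definition gp_rel :: "('v \<Rightarrow> ('a, 'b) monoid_scheme) \<Rightarrow> ('v \<times> 'v) set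
    \<Rightarrow> (('v \<times> 'a) list \<times> ('v \<times> 'a) list) set" where
  "gp_rel Mv E = {(p, q). p \<in> lists (gp_letters Mv) \<and> q \<in> lists (gp_letters Mv)
                      \<and> (symclp (gp_step Mv E))\<^sup>*\<^sup>* p q}"

definition gp_carrier :: "('v \<Rightarrow> ('a, 'b) monoid_scheme) \<Rightarrow> ('v \<times> 'v) set
    \<Rightarrow> ('v \<times> 'a) list set set" where
  "gp_carrier Mv E = lists (gp_letters Mv) // gp_rel Mv E"

definition gp_class :: "('v \<Rightarrow> ('a, 'b) monoid_scheme) \<Rightarrow> ('v \<times> 'v) set
    \<Rightarrow> ('v \<times> 'a) list \<Rightarrow> ('v \<times> 'a) list set" where
  "gp_class Mv E w = gp_rel Mv E `` {w}"

definition gp_reduced :: "('v \<times> 'v) set \<Rightarrow> ('v \<times> 'a) list \<Rightarrow> bool" where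
  "gp_reduced E w \<longleftrightarrow>
     (\<forall>i j. i < j \<and> j < length w \<and> fst (w ! i) = fst (w ! j) \<longrightarrow>
        (\<exists>k. i < k \<and> k < j \<and> (fst (w ! i), fst (w ! k)) \<notin> E))"

definition gp_final :: "('v \<Rightarrow> ('a, 'b) monoid_scheme) \<Rightarrow> ('v \<times> 'v) set \<Rightarrow> 'v
    \<Rightarrow> ('v \<times> 'a) list set \<Rightarrow> 'a \<Rightarrow> ('v \<times> 'a) list set \<Rightarrow> bool" where
  "gp_final Mv E v a c a' \<longleftrightarrow>
     (c \<in> carrier (Mv v) \<and> c \<noteq> \<one>\<^bsub>Mv v\<^esub> \<and>
        (\<exists>w \<in> lists (gp_letters Mv). gp_reduced E (w @ [(v, c)])
            \<and> gp_class Mv E (w @ [(v, c)]) = a \<and> gp_class Mv E w = a'))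
   \<or> (c = \<one>\<^bsub>Mv v\<^esub> \<and> a' = a \<and>
        (\<exists>w \<in> lists (gp_letters Mv). gp_reduced E w \<and> gp_class Mv E w = a \<and>
           ((\<forall>j < length w. fst (w ! j) \<noteq> v) \<or>
            (\<exists>k < length w. (fst (w ! k), v) \<notin> E \<and>
               (\<forall>j. k \<le> j \<and> j < length w \<longrightarrow> fst (w ! j) \<noteq> v)))))"

end

theory Submission
  imports Defs
begin

text \<open>
  Every element has a reduced representative: a word that is not reduced contains two letters of the
  same vertex monoid separated only by letters commuting with them, and merging them shortens the word.
  If the last v-letter of a reduced representative commutes with everything after it, moving it to
  the end exhibits a final v-component; otherwise the component is 1.

  Uniqueness rests on an invariant. For every pair of non-adjacent vertices (u, u'), including u = u',
  project a word onto its subsequence of letters at u or u'. Right multiplication by a letter x at u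
  can be computed on these projections alone: x is merged into the final u-letter if the element has
  one (that is, if u is last in every projection involving u), and appended otherwise. This action
  respects the defining relations and reproduces the projections of reduced words, so all reduced
  representatives of an element share their projections. These determine the final v-letter, and
  words with equal projections are equivalent, which determines the complement.
\<close>

lemma split_two_insert:
  assumes "w1 @ w2 = a @ x # b @ y # c"
  shows "(\<exists>a'. w1 @ z # w2 = a' @ x # b @ y # c)
    \<or> (\<exists>b'. w1 @ z # w2 = a @ x # b' @ y # c \<and> set b' = insert z (set b) \<and> y \<in> set w2)
    \<or> (\<exists>c'. w1 @ z # w2 = a @ x # b @ y # c')"
proof -
  from assms have "w1 @ w2 = a @ (x # b @ y # c)" by simp
  from this[unfolded append_eq_append_conv2] show ?thesis
  proof (elim exE disjE conjE)
    fix us assume A: "w1 = a @ us" "us @ w2 = x # b @ y # c"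
    show ?thesis
    proof (cases us)
      case Nil
      then show ?thesis using A by auto
    next
      case (Cons x' us')
      then have "x' = x" and "us' @ w2 = b @ y # c" using A by auto
      from this(2)[unfolded append_eq_append_conv2] show ?thesis
      proof (elim exE disjE conjE)
        fix vs assume B: "us' = b @ vs" "vs @ w2 = y # c"
        show ?thesis
        proof (cases vs)
          case Nil
          then have "w1 @ z # w2 = a @ x # (b @ [z]) @ y # c" "y \<in> set w2"
            using A B Cons \<open>x' = x\<close> by auto
          then show ?thesis by auto
        next
          case (Cons y' vs')
          then have "w1 @ z # w2 = a @ x # b @ y # (vs' @ z # w2)"
            using A B \<open>us = x' # us'\<close> \<open>x' = x\<close> by auto
          then show ?thesis by blast
        qed
      next
        fix vs assume B: "us' @ vs = b" "w2 = vs @ y # c"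
        then have "w1 @ z # w2 = a @ x # (us' @ z # vs) @ y # c" "y \<in> set w2"
          using A Cons \<open>x' = x\<close> by auto
        then show ?thesis using B by auto
      qed
    qed
  next
    fix us assume "w1 @ us = a" "w2 = us @ x # b @ y # c"
    then have "w1 @ z # w2 = (w1 @ z # us) @ x # b @ y # c" by simp
    then show ?thesis by blast
  qed
qed

locale graph_product =
  fixes Mv :: "'v \<Rightarrow> ('a, 'b) monoid_scheme" and E :: "('v \<times> 'v) set"
  assumes vertex_monoid: "\<And>v. monoid (Mv v)"
    and sym_E: "sym E"
    and irrefl_E: "\<And>v. (v, v) \<notin> E"
begin

abbreviation X :: "('v \<times> 'a) set" where
  "X \<equiv> gp_letters Mv"

abbreviation gp_conv :: "('v \<times> 'a) list \<Rightarrow> ('v \<times> 'a) list \<Rightarrow> bool" where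
  "gp_conv \<equiv> (symclp (gp_step Mv E))\<^sup>*\<^sup>*"

lemma edge_sym: "(u, v) \<in> E \<Longrightarrow> (v, u) \<in> E"
  using sym_E by (simp add: sym_def)

lemma in_X_iff: "(v, m) \<in> X \<longleftrightarrow> m \<in> carrier (Mv v) \<and> m \<noteq> \<one>\<^bsub>Mv v\<^esub>"
  by (simp add: gp_letters_def)

lemma mult_in_X:
  "(v, m) \<in> X \<Longrightarrow> (v, n) \<in> X \<Longrightarrow> m \<otimes>\<^bsub>Mv v\<^esub> n \<noteq> \<one>\<^bsub>Mv v\<^esub> \<Longrightarrow> (v, m \<otimes>\<^bsub>Mv v\<^esub> n) \<in> X"
  using monoid.m_closed[OF vertex_monoid] by (simp add: in_X_iff)

subsection \<open>The defining congruence\<close>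

lemma gp_step_in_lists: "gp_step Mv E p q \<Longrightarrow> p \<in> lists X \<and> q \<in> lists X"
proof (induction rule: gp_step.induct)
  case (mult u w v m n)
  then show ?case using mult_in_X[of v m n] by simp
qed simp

lemma gp_step_append: "gp_step Mv E p q \<Longrightarrow> s \<in> lists X \<Longrightarrow> gp_step Mv E (p @ s) (q @ s)"
proof (induction rule: gp_step.induct)
  case (mult u w v m n)
  have "gp_step Mv E (u @ [(v, m), (v, n)] @ (w @ s))
      (u @ (if m \<otimes>\<^bsub>Mv v\<^esub> n = \<one>\<^bsub>Mv v\<^esub> then [] else [(v, m \<otimes>\<^bsub>Mv v\<^esub> n)]) @ (w @ s))"
    by (rule gp_step.mult) (use mult in auto)
  then show ?case by simp
next
  case (comm u w v m v' n)
  have "gp_step Mv E (u @ [(v, m), (v', n)] @ (w @ s)) (u @ [(v', n), (v, m)] @ (w @ s))"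
    by (rule gp_step.comm) (use comm in auto)
  then show ?case by simp
qed

lemma gp_conv_if_gp_step: "gp_step Mv E p q \<Longrightarrow> gp_conv p q"
  by (simp add: r_into_rtranclp symclp_def)

lemma gp_conv_append: "gp_conv p q \<Longrightarrow> s \<in> lists X \<Longrightarrow> gp_conv (p @ s) (q @ s)"
proof (induction rule: rtranclp_induct)
  case (step y z)
  then have "symclp (gp_step Mv E) (y @ s) (z @ s)"
    using gp_step_append by (auto simp: symclp_def)
  with step show ?case by (meson rtranclp.rtrancl_into_rtrancl)
qed simp

lemma gp_conv_move_left:
  assumes "u \<in> lists X" "w \<in> lists X" "x \<in> X" "s \<in> lists X"
    and "\<forall>y \<in> set s. (fst y, fst x) \<in> E"
  shows "gp_conv (u @ s @ x # w) (u @ x # s @ w)"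
  using assms
proof (induction s arbitrary: w rule: rev_induct)
  case (snoc y s)
  obtain v m v' n where y: "y = (v, m)" and x: "x = (v', n)" by force
  have "gp_step Mv E ((u @ s) @ [(v, m), (v', n)] @ w) ((u @ s) @ [(v', n), (v, m)] @ w)"
    by (rule gp_step.comm) (use snoc.prems y x in auto)
  then have "gp_conv (u @ (s @ [y]) @ x # w) (u @ s @ x # y # w)"
    using y x by (simp add: gp_conv_if_gp_step)
  also have "gp_conv \<dots> (u @ x # s @ y # w)"
    using snoc.prems snoc.IH[of "y # w"] by simp
  finally show ?case by simp
qed simp

lemma equiv_gp_rel: "equiv (lists X) (gp_rel Mv E)"
  unfolding equiv_def refl_on_def sym_def trans_def gp_rel_def
  by (auto intro: rtranclp_symclp_sym rtranclp_trans)

lemma gp_class_eq_iff: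
  "p \<in> lists X \<Longrightarrow> q \<in> lists X \<Longrightarrow> gp_class Mv E p = gp_class Mv E q \<longleftrightarrow> gp_conv p q"
  unfolding gp_class_def using equiv_class_eq_iff[OF equiv_gp_rel, of p q]
  by (auto simp: gp_rel_def)

subsection \<open>Reduced words\<close>

lemma split_at_two_nth:
  assumes "i < j" "j < length w"
  shows "w = take i w @ w ! i # drop (Suc i) (take j w) @ w ! j # drop (Suc j) w"
proof -
  have "w = take j w @ w ! j # drop (Suc j) w"
    using assms by (simp add: id_take_nth_drop)
  moreover have "take j w = take i w @ w ! i # drop (Suc i) (take j w)"
    using assms id_take_nth_drop[of i "take j w"] by simp
  ultimately show ?thesis by (metis append.assoc append_Cons)
qed

lemma gp_reduced_iff:
  "gp_reduced E w \<longleftrightarrow>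
     (\<forall>a x b y c. w = a @ x # b @ y # c \<and> fst x = fst y \<longrightarrow> (\<exists>z \<in> set b. (fst x, fst z) \<notin> E))"
proof
  assume red: "gp_reduced E w"
  show "\<forall>a x b y c. w = a @ x # b @ y # c \<and> fst x = fst y \<longrightarrow> (\<exists>z \<in> set b. (fst x, fst z) \<notin> E)"
  proof (intro allI impI)
    fix a x b y c
    assume w: "w = a @ x # b @ y # c \<and> fst x = fst y"
    let ?i = "length a" and ?j = "length a + Suc (length b)"
    have "w ! ?i = x" "w ! ?j = y" "?j < length w"
      using w by (auto simp: nth_append)
    then obtain k where k: "?i < k" "k < ?j" "(fst x, fst (w ! k)) \<notin> E"
      using red[unfolded gp_reduced_def, rule_format, of ?i ?j] w by auto
    then have "w ! k \<in> set b"
      using w by (auto simp: nth_append nth_Cons' intro!: nth_mem)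
    with k show "\<exists>z \<in> set b. (fst x, fst z) \<notin> E" by blast
  qed
next
  assume red: "\<forall>a x b y c. w = a @ x # b @ y # c \<and> fst x = fst y \<longrightarrow> (\<exists>z \<in> set b. (fst x, fst z) \<notin> E)"
  show "gp_reduced E w"
    unfolding gp_reduced_def
  proof (intro allI impI)
    fix i j
    assume ij: "i < j \<and> j < length w \<and> fst (w ! i) = fst (w ! j)"
    then obtain z where z: "z \<in> set (drop (Suc i) (take j w))" "(fst (w ! i), fst z) \<notin> E"
      using red split_at_two_nth[of i j w] by metis
    then obtain t where "t < j - Suc i" "z = w ! (Suc i + t)"
      using ij by (auto simp: in_set_conv_nth)
    with z(2) show "\<exists>k. i < k \<and> k < j \<and> (fst (w ! i), fst (w ! k)) \<notin> E"
      by (intro exI[of _ "Suc i + t"]) auto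
  qed
qed

lemma gp_reduced_same_fst:
  assumes "gp_reduced E w" "length w = length w'" "\<And>k. k < length w \<Longrightarrow> fst (w ! k) = fst (w' ! k)"
  shows "gp_reduced E w'"
  unfolding gp_reduced_def
proof (intro allI impI)
  fix i j
  assume ij: "i < j \<and> j < length w' \<and> fst (w' ! i) = fst (w' ! j)"
  then have "i < j \<and> j < length w \<and> fst (w ! i) = fst (w ! j)"
    using assms(2,3) by auto
  then obtain k where k: "i < k" "k < j" "(fst (w ! i), fst (w ! k)) \<notin> E"
    using assms(1) unfolding gp_reduced_def by blast
  then have "(fst (w' ! i), fst (w' ! k)) \<notin> E"
    using ij assms(2,3) by auto
  with k show "\<exists>k. i < k \<and> k < j \<and> (fst (w' ! i), fst (w' ! k)) \<notin> E" by blast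
qed

lemma gp_reduced_replace:
  "gp_reduced E (w1 @ (u, l) # w2) \<Longrightarrow> gp_reduced E (w1 @ (u, q) # w2)"
  by (rule gp_reduced_same_fst) (auto simp: nth_append nth_Cons')

definition has_final_letter :: "'v \<Rightarrow> ('v \<times> 'a) list \<Rightarrow> bool" where
  "has_final_letter u w \<longleftrightarrow> (\<exists>w1 l w2. w = w1 @ (u, l) # w2 \<and> (\<forall>y \<in> set w2. (u, fst y) \<in> E))"

lemma has_final_letterE:
  assumes "has_final_letter u w"
  obtains w1 l w2 where "w = w1 @ (u, l) # w2" "\<forall>y \<in> set w2. (u, fst y) \<in> E"
  using assms unfolding has_final_letter_def by blast

lemma has_final_letter_snoc: "has_final_letter u (w @ [(u, l)])"
  unfolding has_final_letter_def by (intro exI[of _ w] exI[of _ l] exI[of _ "[]"]) simp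

lemma gp_reduced_snoc_iff:
  "gp_reduced E (w @ [x]) \<longleftrightarrow> gp_reduced E w \<and> \<not> has_final_letter (fst x) w"
proof
  assume red: "gp_reduced E (w @ [x])"
  have "gp_reduced E w"
    unfolding gp_reduced_iff
  proof (intro allI impI)
    fix a x' b y c
    assume "w = a @ x' # b @ y # c \<and> fst x' = fst y"
    then show "\<exists>z \<in> set b. (fst x', fst z) \<notin> E"
      using red[unfolded gp_reduced_iff, rule_format, of a x' b y "c @ [x]"] by simp
  qed
  moreover have "\<not> has_final_letter (fst x) w"
  proof
    assume "has_final_letter (fst x) w"
    then obtain w1 l w2 where w: "w = w1 @ (fst x, l) # w2" "\<forall>y \<in> set w2. (fst x, fst y) \<in> E"
      by (rule has_final_letterE)
    then show False
      using red[unfolded gp_reduced_iff, rule_format, of w1 "(fst x, l)" w2 x "[]"] by auto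
  qed
  ultimately show "gp_reduced E w \<and> \<not> has_final_letter (fst x) w" ..
next
  assume "gp_reduced E w \<and> \<not> has_final_letter (fst x) w"
  then have red: "gp_reduced E w" and nf: "\<not> has_final_letter (fst x) w" by auto
  show "gp_reduced E (w @ [x])"
    unfolding gp_reduced_iff
  proof (intro allI impI)
    fix a x' b y c
    assume wx: "w @ [x] = a @ x' # b @ y # c \<and> fst x' = fst y"
    show "\<exists>z \<in> set b. (fst x', fst z) \<notin> E"
    proof (cases c rule: rev_cases)
      case Nil
      with wx have "fst x' = fst x" by simp
      with wx Nil have w: "w = a @ (fst x, snd x') # b" by (cases x') simp
      show ?thesis
      proof (rule ccontr)
        assume "\<not> ?thesis"
        with \<open>fst x' = fst x\<close> have "\<forall>z \<in> set b. (fst x, fst z) \<in> E" by auto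
        with w have "has_final_letter (fst x) w" unfolding has_final_letter_def by blast
        with nf show False ..
      qed
    next
      case (snoc c' z)
      with wx have "w = a @ x' # b @ y # c'" by simp
      with wx show ?thesis using red[unfolded gp_reduced_iff, rule_format, of a x' b y c'] by simp
    qed
  qed
qed

lemma gp_reduced_delete:
  assumes red: "gp_reduced E (w1 @ (u, l) # w2)" and adj: "\<forall>y \<in> set w2. (u, fst y) \<in> E"
  shows "gp_reduced E (w1 @ w2)"
  unfolding gp_reduced_iff
proof (intro allI impI)
  fix a x b y c
  assume w: "w1 @ w2 = a @ x # b @ y # c \<and> fst x = fst y"
  have witness: "\<exists>z \<in> set b'. (fst x, fst z) \<notin> E" if "w1 @ (u, l) # w2 = a' @ x # b' @ y # c'" for a' b' c'
    using red w that unfolding gp_reduced_iff by blast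
  consider (before) a' where "w1 @ (u, l) # w2 = a' @ x # b @ y # c"
    | (between) b' where "w1 @ (u, l) # w2 = a @ x # b' @ y # c" "set b' = insert (u, l) (set b)"
        "y \<in> set w2"
    | (after) c' where "w1 @ (u, l) # w2 = a @ x # b @ y # c'"
    using split_two_insert[of w1 w2 a x b y c "(u, l)"] w by blast
  then show "\<exists>z \<in> set b. (fst x, fst z) \<notin> E"
  proof cases
    case between
    \<comment> \<open>the deleted letter is no witness: it commutes with y, which lies at the same vertex as x\<close>
    have "(fst x, u) \<in> E"
      using adj w between(3) edge_sym by auto
    then show ?thesis
      using witness[OF between(1)] between(2) by auto
  qed (use witness in blast)+
qed

lemma not_has_final_letter_delete:
  assumes red: "gp_reduced E (w1 @ (u, l) # w2)" and adj: "\<forall>y \<in> set w2. (u, fst y) \<in> E"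
  shows "\<not> has_final_letter u (w1 @ w2)"
proof
  assume "has_final_letter u (w1 @ w2)"
  then obtain w1' l' w2' where w: "w1 @ w2 = w1' @ (u, l') # w2'" and adj': "\<forall>y \<in> set w2'. (u, fst y) \<in> E"
    by (rule has_final_letterE)
  from w show False
    unfolding append_eq_append_conv2
  proof (elim exE disjE conjE)
    fix us assume A: "w1 = w1' @ us" "us @ w2 = (u, l') # w2'"
    show False
    proof (cases us)
      case Nil
      then show False using A adj irrefl_E by (cases w2) auto
    next
      case (Cons z us')
      then have "w1 @ (u, l) # w2 = w1' @ (u, l') # us' @ (u, l) # w2" "set us' \<subseteq> set w2'"
        using A by auto
      then show False
        using red[unfolded gp_reduced_iff, rule_format, of w1' "(u, l')" us' "(u, l)" w2] adj' by auto
    qed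
  next
    fix us assume "w1 @ us = w1'" "w2 = us @ (u, l') # w2'"
    then show False using adj irrefl_E by auto
  qed
qed

lemma gp_conv_shorter_if_not_reduced:
  assumes "w \<in> lists X" "\<not> gp_reduced E w"
  obtains w' where "gp_conv w w'" "w' \<in> lists X" "length w' < length w"
proof -
  obtain a x b y c where w: "w = a @ x # b @ y # c" "fst x = fst y" "\<forall>z \<in> set b. (fst x, fst z) \<in> E"
    using assms(2) unfolding gp_reduced_iff by blast
  obtain v m n where x: "x = (v, m)" and y: "y = (v, n)"
    using w(2) by (metis prod.collapse)
  have in_X: "a \<in> lists X" "x \<in> X" "b \<in> lists X" "y \<in> X" "c \<in> lists X"
    using assms(1) w by auto
  define r where "r = (if m \<otimes>\<^bsub>Mv v\<^esub> n = \<one>\<^bsub>Mv v\<^esub> then [] else [(v, m \<otimes>\<^bsub>Mv v\<^esub> n)])"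
  have "gp_conv ((a @ [x]) @ b @ y # c) ((a @ [x]) @ y # b @ c)"
    by (rule gp_conv_move_left) (use in_X w(3) x y edge_sym in auto)
  moreover have step: "gp_step Mv E (a @ [(v, m), (v, n)] @ (b @ c)) (a @ r @ (b @ c))"
    unfolding r_def by (rule gp_step.mult) (use in_X x y in auto)
  then have "gp_conv ((a @ [x]) @ y # b @ c) (a @ r @ b @ c)"
    using x y by (simp add: gp_conv_if_gp_step)
  ultimately have "gp_conv w (a @ r @ b @ c)"
    using w(1) by (metis (no_types, lifting) append.assoc append_Cons append_Nil rtranclp_trans)
  moreover have "a @ r @ b @ c \<in> lists X"
    using gp_step_in_lists[OF step] by simp
  moreover have "length (a @ r @ b @ c) < length w"
    using w(1) by (auto simp: r_def)
  ultimately show ?thesis using that by blast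
qed

lemma gp_reduced_if_shortest:
  assumes "w \<in> lists X" "\<And>w'. gp_conv w w' \<Longrightarrow> w' \<in> lists X \<Longrightarrow> length w \<le> length w'"
  shows "gp_reduced E w"
  using gp_conv_shorter_if_not_reduced assms by (metis not_less)

subsection \<open>Projections onto non-adjacent pairs of vertices\<close>

definition proj :: "('v \<times> 'a) list \<Rightarrow> 'v \<times> 'v \<Rightarrow> ('v \<times> 'a) list" where
  "proj w p = (if p \<in> E then [] else filter (\<lambda>y. fst y = fst p \<or> fst y = snd p) w)"

definition ends_in :: "('v \<times> 'v \<Rightarrow> ('v \<times> 'a) list) \<Rightarrow> 'v \<Rightarrow> bool" where
  "ends_in P u \<longleftrightarrow> (\<forall>u'. (u, u') \<notin> E \<longrightarrow> P (u, u') \<noteq> [] \<and> fst (last (P (u, u'))) = u)"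

lemma proj_Nil [simp]: "proj [] p = []"
  by (simp add: proj_def)

lemma proj_Cons [simp]:
  "proj (x # w) p = (if p \<notin> E \<and> (fst x = fst p \<or> fst x = snd p) then x # proj w p else proj w p)"
  by (simp add: proj_def)

lemma proj_append [simp]: "proj (w @ w') p = proj w p @ proj w' p"
  by (simp add: proj_def)

lemma proj_adjacent_Nil:
  assumes "\<forall>y \<in> set w. (u, fst y) \<in> E" "p \<notin> E" "fst p = u \<or> snd p = u"
  shows "proj w p = []"
proof -
  have "\<not> (fst y = fst p \<or> fst y = snd p)" if "y \<in> set w" for y
  proof
    assume "fst y = fst p \<or> fst y = snd p"
    moreover have "(u, fst y) \<in> E" "(fst y, u) \<in> E"
      using assms(1) that edge_sym by auto
    ultimately show False
      using assms(2,3) irrefl_E by (cases p) auto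
  qed
  then show ?thesis by (simp add: proj_def filter_empty_conv)
qed

lemma proj_move_right:
  assumes "\<forall>y \<in> set w2. (u, fst y) \<in> E"
  shows "proj (w1 @ (u, l) # w2) = proj (w1 @ w2 @ [(u, l)])"
proof
  fix p
  show "proj (w1 @ (u, l) # w2) p = proj (w1 @ w2 @ [(u, l)]) p"
  proof (cases "(fst p = u \<or> snd p = u) \<and> p \<notin> E")
    case True
    then show ?thesis using proj_adjacent_Nil[OF assms] by auto
  next
    case False
    then show ?thesis by auto
  qed
qed

lemma proj_snoc_cancel: "proj (w @ [x]) = proj (w' @ [x]) \<Longrightarrow> proj w = proj w'"
proof
  fix p
  assume "proj (w @ [x]) = proj (w' @ [x])"
  then have "proj (w @ [x]) p = proj (w' @ [x]) p" by simp
  then show "proj w p = proj w' p" by (simp add: proj_def split: if_splits)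
qed

lemma last_proj_final_letter:
  assumes "\<forall>y \<in> set w2. (u, fst y) \<in> E"
  shows "last (proj (w1 @ (u, l) # w2) (u, u)) = (u, l)"
  using proj_adjacent_Nil[OF assms, of "(u, u)"] irrefl_E by simp

lemma ends_in_proj_iff: "ends_in (proj w) u \<longleftrightarrow> has_final_letter u w"
proof
  assume ends: "ends_in (proj w) u"
  then have "proj w (u, u) \<noteq> []"
    using irrefl_E unfolding ends_in_def by blast
  then have "\<exists>y \<in> set w. fst y = u"
    using irrefl_E by (auto simp: proj_def filter_empty_conv)
  then obtain w1 z w2 where w: "w = w1 @ z # w2" "fst z = u" "\<forall>y \<in> set w2. fst y \<noteq> u"
    by (rule split_list_last_propE)
  have "(u, fst y) \<in> E" if y: "y \<in> set w2" for y
  proof (rule ccontr)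
    assume nonadj: "(u, fst y) \<notin> E"
    let ?f = "filter (\<lambda>t. fst t = u \<or> fst t = fst y) w2"
    have "?f \<noteq> []" using y by (auto simp: filter_empty_conv)
    moreover have "proj w (u, fst y) = proj (w1 @ [z]) (u, fst y) @ ?f"
      using nonadj w(1) by (simp add: proj_def)
    ultimately have "last (proj w (u, fst y)) = last ?f" by simp
    moreover have "last ?f \<in> set w2"
      using \<open>?f \<noteq> []\<close> by (metis last_in_set filter_is_subset subsetD)
    ultimately have "last (proj w (u, fst y)) \<in> set w2" by simp
    then have "fst (last (proj w (u, fst y))) \<noteq> u" using w(3) by blast
    with ends nonadj show False unfolding ends_in_def by blast
  qed
  moreover obtain l where "z = (u, l)"
    using w(2) by (cases z) auto
  ultimately show "has_final_letter u w"
    using w(1) unfolding has_final_letter_def by blast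
next
  assume "has_final_letter u w"
  then obtain w1 l w2 where "w = w1 @ (u, l) # w2" "\<forall>y \<in> set w2. (u, fst y) \<in> E"
    by (rule has_final_letterE)
  then show "ends_in (proj w) u"
    using proj_adjacent_Nil unfolding ends_in_def by simp
qed

subsection \<open>Right multiplication on projections\<close>

definition update ::
  "('v \<times> 'v \<Rightarrow> ('v \<times> 'a) list) \<Rightarrow> 'v \<Rightarrow> (('v \<times> 'a) list \<Rightarrow> ('v \<times> 'a) list) \<Rightarrow> 'v \<times> 'v \<Rightarrow> ('v \<times> 'a) list"
  where "update P u f p = (if (fst p = u \<or> snd p = u) \<and> p \<notin> E then f (P p) else P p)"

definition letter_effect ::
  "('v \<times> 'v \<Rightarrow> ('v \<times> 'a) list) \<Rightarrow> 'v \<times> 'a \<Rightarrow> ('v \<times> 'a) list \<Rightarrow> ('v \<times> 'a) list"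
  where "letter_effect P x =
    (if ends_in P (fst x) then
      (if snd (last (P (fst x, fst x))) \<otimes>\<^bsub>Mv (fst x)\<^esub> snd x = \<one>\<^bsub>Mv (fst x)\<^esub> then butlast
       else (\<lambda>s. butlast s @ [(fst x, snd (last (P (fst x, fst x))) \<otimes>\<^bsub>Mv (fst x)\<^esub> snd x)]))
     else (\<lambda>s. s @ [x]))"

definition act :: "('v \<times> 'v \<Rightarrow> ('v \<times> 'a) list) \<Rightarrow> 'v \<times> 'a \<Rightarrow> 'v \<times> 'v \<Rightarrow> ('v \<times> 'a) list" where
  "act P x = update P (fst x) (letter_effect P x)"

definition act_word :: "('v \<times> 'a) list \<Rightarrow> 'v \<times> 'v \<Rightarrow> ('v \<times> 'a) list" where
  "act_word w = foldl act (\<lambda>_. []) w"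

lemma update_adjacent: "(u, u') \<in> E \<Longrightarrow> (u', u'') \<notin> E \<Longrightarrow> update P u f (u', u'') = P (u', u'')"
  using irrefl_E edge_sym by (auto simp: update_def)

lemma update_commute: "(u, u') \<in> E \<Longrightarrow> update (update P u f) u' g = update (update P u' g) u f"
  by (rule ext) (use irrefl_E edge_sym in \<open>auto simp: update_def\<close>)

lemma letter_effect_update: "(u, fst x) \<in> E \<Longrightarrow> letter_effect (update P u f) x = letter_effect P x"
proof -
  assume adj: "(u, fst x) \<in> E"
  have "ends_in (update P u f) (fst x) \<longleftrightarrow> ends_in P (fst x)"
    unfolding ends_in_def using update_adjacent[OF adj] by simp
  moreover have "update P u f (fst x, fst x) = P (fst x, fst x)"
    using update_adjacent[OF adj] irrefl_E by simp
  ultimately show ?thesis by (simp add: letter_effect_def)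
qed

lemma act_commute: "(fst x, fst y) \<in> E \<Longrightarrow> act (act P x) y = act (act P y) x"
  by (simp add: act_def letter_effect_update edge_sym update_commute)

lemma act_proj_snoc: "\<not> has_final_letter (fst x) w \<Longrightarrow> act (proj w) x = proj (w @ [x])"
  by (rule ext) (auto simp: act_def letter_effect_def update_def ends_in_proj_iff)

lemma update_proj_final_letter:
  assumes "\<forall>y \<in> set w2. (u, fst y) \<in> E" "\<forall>y \<in> set r. fst y = u"
  shows "update (proj (w1 @ (u, l) # w2)) u (\<lambda>s. butlast s @ r) = proj (w1 @ r @ w2)"
proof
  fix p
  have "proj r p = (if (fst p = u \<or> snd p = u) \<and> p \<notin> E then r else [])"
    using assms(2) by (induction r) auto
  then show "update (proj (w1 @ (u, l) # w2)) u (\<lambda>s. butlast s @ r) p = proj (w1 @ r @ w2) p"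
    using proj_adjacent_Nil[OF assms(1)] by (auto simp: update_def)
qed

lemma act_proj_final_letter:
  assumes "\<forall>y \<in> set w2. (u, fst y) \<in> E"
  shows "act (proj (w1 @ (u, l) # w2)) (u, m) =
    (if l \<otimes>\<^bsub>Mv u\<^esub> m = \<one>\<^bsub>Mv u\<^esub> then proj (w1 @ w2) else proj (w1 @ (u, l \<otimes>\<^bsub>Mv u\<^esub> m) # w2))"
proof -
  have "ends_in (proj (w1 @ (u, l) # w2)) u"
    using assms ends_in_proj_iff has_final_letter_def by blast
  then have "act (proj (w1 @ (u, l) # w2)) (u, m) =
    update (proj (w1 @ (u, l) # w2)) u (\<lambda>s. butlast s @
      (if l \<otimes>\<^bsub>Mv u\<^esub> m = \<one>\<^bsub>Mv u\<^esub> then [] else [(u, l \<otimes>\<^bsub>Mv u\<^esub> m)]))"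
    using last_proj_final_letter[OF assms] by (simp add: act_def letter_effect_def)
  also have "\<dots> = proj (w1 @ (if l \<otimes>\<^bsub>Mv u\<^esub> m = \<one>\<^bsub>Mv u\<^esub> then [] else [(u, l \<otimes>\<^bsub>Mv u\<^esub> m)]) @ w2)"
    by (rule update_proj_final_letter) (use assms in auto)
  finally show ?thesis by simp
qed

lemma act_proj_reduced:
  assumes "w \<in> lists X" "gp_reduced E w" "x \<in> X"
  obtains w' where "w' \<in> lists X" "gp_reduced E w'" "act (proj w) x = proj w'"
proof (cases "has_final_letter (fst x) w")
  case False
  then show ?thesis
    using that[of "w @ [x]"] assms by (simp add: act_proj_snoc gp_reduced_snoc_iff)
next
  case True
  obtain u m where x: "x = (u, m)" by force
  obtain w1 l w2 where w: "w = w1 @ (u, l) # w2" and adj: "\<forall>y \<in> set w2. (u, fst y) \<in> E"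
    using True x by (auto elim: has_final_letterE)
  show ?thesis
  proof (cases "l \<otimes>\<^bsub>Mv u\<^esub> m = \<one>\<^bsub>Mv u\<^esub>")
    case True
    then show ?thesis
      using that[of "w1 @ w2"] assms w x act_proj_final_letter[OF adj] gp_reduced_delete[OF _ adj]
      by auto
  next
    case False
    then have "(u, l \<otimes>\<^bsub>Mv u\<^esub> m) \<in> X"
      using assms w x by (auto intro: mult_in_X)
    moreover have "gp_reduced E (w1 @ (u, l \<otimes>\<^bsub>Mv u\<^esub> m) # w2)"
      using assms(2) w by (simp add: gp_reduced_replace[of w1 u l w2])
    ultimately show ?thesis
      using that[of "w1 @ (u, l \<otimes>\<^bsub>Mv u\<^esub> m) # w2"] False assms w x act_proj_final_letter[OF adj]
      by auto
  qed
qed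

lemma act_mult:
  assumes w: "w \<in> lists X" "gp_reduced E w" and mn: "(u, m) \<in> X" "(u, n) \<in> X"
  shows "act (act (proj w) (u, m)) (u, n) =
    (if m \<otimes>\<^bsub>Mv u\<^esub> n = \<one>\<^bsub>Mv u\<^esub> then proj w else act (proj w) (u, m \<otimes>\<^bsub>Mv u\<^esub> n))"
proof -
  interpret M: monoid "Mv u" by (rule vertex_monoid)
  have carr: "m \<in> carrier (Mv u)" "n \<in> carrier (Mv u)"
    using mn by (auto simp: in_X_iff)
  show ?thesis
  proof (cases "has_final_letter u w")
    case False
    then show ?thesis
      using act_proj_final_letter[of "[]" u w m n] by (simp add: act_proj_snoc)
  next
    case True
    then obtain w1 l w2 where w12: "w = w1 @ (u, l) # w2" and adj: "\<forall>y \<in> set w2. (u, fst y) \<in> E"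
      by (rule has_final_letterE)
    have l: "l \<in> carrier (Mv u)" "l \<noteq> \<one>\<^bsub>Mv u\<^esub>"
      using w(1) w12 by (auto simp: in_X_iff)
    have assoc: "l \<otimes>\<^bsub>Mv u\<^esub> m \<otimes>\<^bsub>Mv u\<^esub> n = l \<otimes>\<^bsub>Mv u\<^esub> (m \<otimes>\<^bsub>Mv u\<^esub> n)"
      using l carr by (simp add: M.m_assoc)
    note act_w = act_proj_final_letter[OF adj, of w1 l, folded w12]
    show ?thesis
    proof (cases "l \<otimes>\<^bsub>Mv u\<^esub> m = \<one>\<^bsub>Mv u\<^esub>")
      case True
      \<comment> \<open>m cancels the final letter l, so n becomes the new final letter\<close>
      have "\<not> has_final_letter u (w1 @ w2)"
        using not_has_final_letter_delete w(2) w12 adj by simp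
      then have "act (act (proj w) (u, m)) (u, n) = proj (w1 @ (u, n) # w2)"
        using True act_w by (simp add: act_proj_snoc proj_move_right[OF adj])
      moreover have n: "l \<otimes>\<^bsub>Mv u\<^esub> (m \<otimes>\<^bsub>Mv u\<^esub> n) = n"
        using True assoc carr by simp
      moreover have "m \<otimes>\<^bsub>Mv u\<^esub> n = \<one>\<^bsub>Mv u\<^esub> \<Longrightarrow> n = l"
        using n l by simp
      moreover have "n \<noteq> \<one>\<^bsub>Mv u\<^esub>"
        using mn by (simp add: in_X_iff)
      ultimately show ?thesis
        using act_w w12 by auto
    next
      case False
      then show ?thesis
        using act_w act_proj_final_letter[OF adj] assoc l w12 by auto
    qed
  qed
qed

lemma act_word_snoc [simp]: "act_word (w @ [x]) = act (act_word w) x"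
  by (simp add: act_word_def)

lemma act_word_reduced: "gp_reduced E w \<Longrightarrow> act_word w = proj w"
proof (induction w rule: rev_induct)
  case Nil
  then show ?case by (auto simp: act_word_def)
next
  case (snoc x w)
  then show ?case by (simp add: gp_reduced_snoc_iff act_proj_snoc)
qed

lemma act_word_proj_reduced:
  assumes "w \<in> lists X"
  obtains w' where "w' \<in> lists X" "gp_reduced E w'" "act_word w = proj w'"
  using assms
proof (induction w arbitrary: thesis rule: rev_induct)
  case Nil
  then show ?case using act_word_reduced[of "[]"] Nil(1)[of "[]"] by (simp add: gp_reduced_def)
next
  case (snoc x w)
  then obtain w' where "w' \<in> lists X" "gp_reduced E w'" "act_word w = proj w'" by auto
  with snoc.prems show ?case using act_proj_reduced[of w' x] by auto
qed

lemma act_word_append: "act_word (w @ s) = foldl act (act_word w) s"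
  by (simp add: act_word_def)

lemma act_word_gp_step: "gp_step Mv E p q \<Longrightarrow> act_word p = act_word q"
proof (induction rule: gp_step.induct)
  case (mult u w v m n)
  obtain u' where "u' \<in> lists X" "gp_reduced E u'" "act_word u = proj u'"
    using act_word_proj_reduced[OF mult(1)] .
  then show ?case using act_mult mult(3,4) by (simp add: act_word_append)
next
  case (comm u w v m v' n)
  then show ?case using act_commute[of "(v, m)" "(v', n)"] by (simp add: act_word_append)
qed

lemma act_word_gp_conv: "gp_conv p q \<Longrightarrow> act_word p = act_word q"
  by (induction rule: rtranclp_induct) (auto simp: symclp_def dest: act_word_gp_step)

lemma gp_conv_if_proj_eq:
  "w \<in> lists X \<Longrightarrow> w' \<in> lists X \<Longrightarrow> proj w = proj w' \<Longrightarrow> gp_conv w w'"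
proof (induction w arbitrary: w' rule: rev_induct)
  case Nil
  have "w' = []"
  proof (rule ccontr)
    assume "w' \<noteq> []"
    then obtain y w'' where "w' = y # w''" by (cases w') auto
    then have "proj w' (fst y, fst y) \<noteq> []"
      using irrefl_E by simp
    with Nil.prems(3) show False by (metis proj_Nil)
  qed
  then show ?case by simp
next
  case (snoc x w)
  obtain u m where x: "x = (u, m)" by force
  have "ends_in (proj (w @ [x])) u"
    using has_final_letter_snoc[of u w m] x by (simp add: ends_in_proj_iff)
  then have "has_final_letter u w'"
    by (simp only: snoc.prems(3) ends_in_proj_iff)
  then obtain a l b where w': "w' = a @ (u, l) # b" and adj: "\<forall>y \<in> set b. (u, fst y) \<in> E"
    by (rule has_final_letterE)
  have "(u, m) = last (proj (w @ [x]) (u, u))"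
    using x irrefl_E by simp
  also have "\<dots> = last (proj w' (u, u))"
    by (simp only: snoc.prems(3))
  also have "\<dots> = (u, l)"
    using last_proj_final_letter[OF adj] w' by simp
  finally have "l = m" by simp
  then have "proj w' = proj ((a @ b) @ [x])"
    using proj_move_right[OF adj] w' x by simp
  then have "proj w = proj (a @ b)"
    using snoc.prems(3) by (metis proj_snoc_cancel)
  moreover have in_X: "w \<in> lists X" "a @ b \<in> lists X" "x \<in> X"
    using snoc.prems w' by auto
  ultimately have "gp_conv w (a @ b)"
    using snoc.IH by metis
  then have "gp_conv (w @ [x]) ((a @ b) @ [x])"
    using in_X gp_conv_append[of w "a @ b" "[x]"] by simp
  also have "gp_conv \<dots> w'"
    using gp_conv_move_left[of a "[]" x b] in_X adj edge_sym w' x \<open>l = m\<close> by auto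
  finally show ?case .
qed

subsection \<open>Final components\<close>

lemma last_nonadjacent_after_last_letter:
  assumes "\<not> has_final_letter v w" "\<exists>y \<in> set w. fst y = v"
  obtains k where "k < length w" "(fst (w ! k), v) \<notin> E"
    "\<forall>j. k \<le> j \<and> j < length w \<longrightarrow> fst (w ! j) \<noteq> v"
proof -
  obtain w1 z w2 where w: "w = w1 @ z # w2" "fst z = v" "\<forall>y \<in> set w2. fst y \<noteq> v"
    using assms(2) by (rule split_list_last_propE)
  have "\<exists>y \<in> set w2. (v, fst y) \<notin> E"
    using assms(1) w(1,2) unfolding has_final_letter_def by (metis prod.collapse)
  then obtain i where i: "i < length w2" "(v, fst (w2 ! i)) \<notin> E"
    by (auto simp: in_set_conv_nth)
  let ?k = "length w1 + Suc i"
  have "?k < length w" "w ! ?k = w2 ! i"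
    using w(1) i(1) by (auto simp: nth_append)
  moreover have "fst (w ! j) \<noteq> v" if "?k \<le> j" "j < length w" for j
    using that w by (auto simp: nth_append nth_Cons' split: if_splits)
  ultimately show ?thesis
    using that i(2) edge_sym by metis
qed

lemma no_final_letter_iff:
  "((\<forall>j < length w. fst (w ! j) \<noteq> v) \<or>
    (\<exists>k < length w. (fst (w ! k), v) \<notin> E \<and> (\<forall>j. k \<le> j \<and> j < length w \<longrightarrow> fst (w ! j) \<noteq> v)))
   \<longleftrightarrow> \<not> has_final_letter v w"
proof
  assume clause: "(\<forall>j < length w. fst (w ! j) \<noteq> v) \<or>
    (\<exists>k < length w. (fst (w ! k), v) \<notin> E \<and> (\<forall>j. k \<le> j \<and> j < length w \<longrightarrow> fst (w ! j) \<noteq> v))"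
  show "\<not> has_final_letter v w"
  proof
    assume "has_final_letter v w"
    then obtain w1 l w2 where w: "w = w1 @ (v, l) # w2" and adj: "\<forall>y \<in> set w2. (v, fst y) \<in> E"
      by (rule has_final_letterE)
    have v_at: "fst (w ! length w1) = v" "length w1 < length w"
      using w by auto
    with clause obtain k where k: "k < length w" "(fst (w ! k), v) \<notin> E"
      "\<forall>j. k \<le> j \<and> j < length w \<longrightarrow> fst (w ! j) \<noteq> v"
      by blast
    then have "length w1 < k"
      using v_at by (metis not_less)
    then have "w ! k \<in> set w2"
      using k(1) w by (auto simp: nth_append)
    with adj k(2) show False
      using edge_sym by blast
  qed
next
  assume "\<not> has_final_letter v w"
  then show "(\<forall>j < length w. fst (w ! j) \<noteq> v) \<or>
    (\<exists>k < length w. (fst (w ! k), v) \<notin> E \<and> (\<forall>j. k \<le> j \<and> j < length w \<longrightarrow> fst (w ! j) \<noteq> v))"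
    using last_nonadjacent_after_last_letter by (metis nth_mem)
qed

lemma gp_final_act_word:
  assumes final: "gp_final Mv E v a c a'" and w: "w \<in> lists X" "gp_class Mv E w = a"
  shows "(c \<noteq> \<one>\<^bsub>Mv v\<^esub> \<and> (\<exists>w' \<in> lists X. gp_class Mv E w' = a' \<and> act_word w = proj (w' @ [(v, c)])))
    \<or> (c = \<one>\<^bsub>Mv v\<^esub> \<and> a' = a \<and> \<not> ends_in (act_word w) v)"
proof -
  have act_word_rep: "act_word w = proj r" if "r \<in> lists X" "gp_reduced E r" "gp_class Mv E r = a" for r
    using that w act_word_reduced act_word_gp_conv gp_class_eq_iff by metis
  from final show ?thesis
    unfolding gp_final_def no_final_letter_iff
  proof (elim disjE conjE bexE)
    fix w' assume "c \<in> carrier (Mv v)" "c \<noteq> \<one>\<^bsub>Mv v\<^esub>" "w' \<in> lists X" "gp_reduced E (w' @ [(v, c)])"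
      "gp_class Mv E (w' @ [(v, c)]) = a" "gp_class Mv E w' = a'"
    then show ?thesis
      using act_word_rep[of "w' @ [(v, c)]"] by (auto simp: in_X_iff)
  next
    fix r assume "c = \<one>\<^bsub>Mv v\<^esub>" "a' = a" "r \<in> lists X" "gp_reduced E r" "gp_class Mv E r = a"
      "\<not> has_final_letter v r"
    then show ?thesis
      using act_word_rep[of r] by (simp add: ends_in_proj_iff)
  qed
qed

lemma gp_carrier_rep:
  assumes "a \<in> gp_carrier Mv E"
  obtains w where "w \<in> lists X" "gp_class Mv E w = a"
  using assms unfolding gp_carrier_def gp_class_def by (metis quotientE)

lemma gp_final_unique:
  assumes "a \<in> gp_carrier Mv E" "gp_final Mv E v a c1 a1" "gp_final Mv E v a c2 a2"
  shows "c1 = c2 \<and> a1 = a2"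
proof -
  obtain w where w: "w \<in> lists X" "gp_class Mv E w = a"
    using assms(1) by (rule gp_carrier_rep)
  have ends: "ends_in (proj (w' @ [(v, c)])) v" for w' c
    by (simp add: ends_in_proj_iff has_final_letter_snoc)
  have last: "last (proj (w' @ [(v, c)]) (v, v)) = (v, c)" for w' c
    using irrefl_E by simp
  from gp_final_act_word[OF assms(2) w] gp_final_act_word[OF assms(3) w] show ?thesis
  proof (elim disjE conjE bexE)
    fix w1 w2
    assume w1: "w1 \<in> lists X" "gp_class Mv E w1 = a1" "act_word w = proj (w1 @ [(v, c1)])"
      and w2: "w2 \<in> lists X" "gp_class Mv E w2 = a2" "act_word w = proj (w2 @ [(v, c2)])"
    then have "proj (w1 @ [(v, c1)]) = proj (w2 @ [(v, c2)])" by simp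
    moreover from this have "c1 = c2"
      using last[of w1 c1] last[of w2 c2] by simp
    ultimately have "proj w1 = proj w2"
      by (metis proj_snoc_cancel)
    then have "a1 = a2"
      using w1 w2 gp_conv_if_proj_eq gp_class_eq_iff by metis
    with \<open>c1 = c2\<close> show ?thesis ..
  qed (use ends in auto)
qed

lemma gp_class_shortest_rep:
  assumes "a \<in> gp_carrier Mv E"
  obtains w where "w \<in> lists X" "gp_class Mv E w = a"
    "\<forall>w' \<in> lists X. gp_class Mv E w' = a \<longrightarrow> length w \<le> length w'"
proof -
  obtain w0 where "w0 \<in> lists X" "gp_class Mv E w0 = a"
    using assms by (rule gp_carrier_rep)
  then obtain w where "w \<in> lists X \<and> gp_class Mv E w = a"
    "\<forall>w'. w' \<in> lists X \<and> gp_class Mv E w' = a \<longrightarrow> length w \<le> length w'"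
    using ex_has_least_nat[of "\<lambda>w. w \<in> lists X \<and> gp_class Mv E w = a" w0 length] by blast
  then show ?thesis using that by blast
qed

lemma gp_final_exists:
  assumes "a \<in> gp_carrier Mv E"
  shows "\<exists>c a'. gp_final Mv E v a c a'"
proof -
  obtain w where w: "w \<in> lists X" "gp_class Mv E w = a"
    and shortest: "\<forall>w' \<in> lists X. gp_class Mv E w' = a \<longrightarrow> length w \<le> length w'"
    using assms by (rule gp_class_shortest_rep)
  have reduced: "gp_reduced E r"
    if "r \<in> lists X" "gp_class Mv E r = a" "length r = length w" for r
    by (rule gp_reduced_if_shortest) (use that w shortest gp_class_eq_iff in metis)+
  show ?thesis
  proof (cases "has_final_letter v w")
    case False
    then have "gp_final Mv E v a \<one>\<^bsub>Mv v\<^esub> a"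
      unfolding gp_final_def no_final_letter_iff using w reduced by blast
    then show ?thesis by blast
  next
    case True
    then obtain w1 c w2 where w12: "w = w1 @ (v, c) # w2" and adj: "\<forall>y \<in> set w2. (v, fst y) \<in> E"
      by (rule has_final_letterE)
    let ?w' = "w1 @ w2 @ [(v, c)]"
    have in_X: "w1 \<in> lists X" "w2 \<in> lists X" "(v, c) \<in> X"
      using w(1) w12 by auto
    have "gp_conv ?w' w"
      using gp_conv_move_left[of w1 "[]" "(v, c)" w2] in_X adj edge_sym w12 by auto
    then have "gp_class Mv E ?w' = a"
      using in_X w gp_class_eq_iff[of ?w' w] by simp
    moreover have "gp_reduced E ?w'"
      using reduced[of ?w'] in_X w12 \<open>gp_class Mv E ?w' = a\<close> by simp
    ultimately have "gp_final Mv E v a c (gp_class Mv E (w1 @ w2))"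
      unfolding gp_final_def using in_X by (intro disjI1 conjI bexI[of _ "w1 @ w2"]) (auto simp: in_X_iff)
    then show ?thesis by blast
  qed
qed

end

theorem proposition1p3:
  fixes Mv :: "'v \<Rightarrow> ('a, 'b) monoid_scheme" and E :: "('v \<times> 'v) set"
  assumes "\<And>v. monoid (Mv v)"
    and "sym E"
    and "\<And>v. (v, v) \<notin> E"
  shows "\<forall>v. \<forall>a \<in> gp_carrier Mv E.
           (\<exists>!c. \<exists>a'. gp_final Mv E v a c a') \<and> (\<exists>!a'. \<exists>c. gp_final Mv E v a c a')"
proof (intro allI ballI conjI)
  interpret graph_product Mv E
    by (rule graph_product.intro) (use assms in auto)
  fix v a
  assume a: "a \<in> gp_carrier Mv E"
  then obtain c a' where "gp_final Mv E v a c a'"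
    using gp_final_exists by blast
  with gp_final_unique[OF a] show "\<exists>!c. \<exists>a'. gp_final Mv E v a c a'" "\<exists>!a'. \<exists>c. gp_final Mv E v a c a'"
    by blast+
qed

end
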